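(* For $i=1,2$ let $\mathcal{G}_i$ be an $r_i$-regular graph with $n_i$ vertices, and let $\mu_{11},\ldots,\mu_{1n_1}$ be the Laplacian eigenvalues of $\mathcal{G}_1$. Then $\mathcal{G}_1\circledast\mathcal{G}_2$ is Laplacian integral if and only if $\mathcal{G}_2$ is Laplacian integral and, for each $i=1,2,\ldots,n_1$, the roots of $x-n_2-n_2\mu_{1i}-n_2\chi_{L_{\mathcal{G}_2}}(x-n_2)$ are integers.
   Context: All graphs are simple, finite and undirected. $L_{\mathcal{G}}=D_{\mathcal{G}}-A_{\mathcal{G}}$ is the Laplacian matrix (degree matrix minus adjacency matrix). A graph is Laplacian integral if all eigenvalues of its Laplacian matrix are integers. The Laplacian coronal of a graph $\mathcal{G}$ on $n$ vertices is the rational function $\chi_{L_{\mathcal{G}}}(x)=\mathbf{1}_n^T(xI_n-L_{\mathcal{G}})^{-1}\mathbf{1}_n$, $\mathbf{1}_n$ the all-ones vector; "roots" of the expression in the claim are the values of $x$ at which this rational function vanishes. The graph product $\mathcal{G}_1\circledast\mathcal{G}_2$ of $\mathcal{G}_1$ (vertices $u_1,\ldots,u_{n_1}$) and $\mathcal{G}_2$ (vertices $v_1,\ldots,v_{n_2}$) has vertex set $\{a_{ik},b_{ik}:1\le i\le n_1,1\le k\le n_2\}$ and edges: $a_{ik}a_{jl}$ for all $k,l$ whenever $u_iu_j\in E(\mathcal{G}_1)$; $b_{ri}b_{rj}$ for all $r$ whenever $v_iv_j\in E(\mathcal{G}_2)$; $a_{ip}b_{iq}$ for all $i,p,q$. 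*)

theory Defs
  imports "HOL-Analysis.Analysis"
begin

definition simple_graph :: "('v \<Rightarrow> 'v \<Rightarrow> bool) \<Rightarrow> bool" where
  "simple_graph E \<longleftrightarrow> (\<forall>u v. E u v \<longrightarrow> E v u) \<and> (\<forall>v. \<not> E v v)"

definition degree :: "('v::finite \<Rightarrow> 'v \<Rightarrow> bool) \<Rightarrow> 'v \<Rightarrow> nat" where
  "degree E v = card {w. E v w}"

definition regular :: "('v::finite \<Rightarrow> 'v \<Rightarrow> bool) \<Rightarrow> nat \<Rightarrow> bool" where
  "regular E r \<longleftrightarrow> (\<forall>v. degree E v = r)"

definition laplacian :: "('v::finite \<Rightarrow> 'v \<Rightarrow> bool) \<Rightarrow> real^'v^'v" where
  "laplacian E = (\<chi> i j. (if i = j then real (degree E i) else 0) - (if E i j then 1 else 0))"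

text \<open>The Laplacian viewed as a complex matrix (needed to evaluate the coronal at complex x).\<close>
definition claplacian :: "('v::finite \<Rightarrow> 'v \<Rightarrow> bool) \<Rightarrow> complex^'v^'v" where
  "claplacian E = (\<chi> i j. complex_of_real (laplacian E $ i $ j))"

definition is_eigenvalue :: "real^'n^'n \<Rightarrow> real \<Rightarrow> bool" where
  "is_eigenvalue A c \<longleftrightarrow> (\<exists>v. v \<noteq> 0 \<and> A *v v = c *\<^sub>R v)"

definition laplacian_integral :: "('v::finite \<Rightarrow> 'v \<Rightarrow> bool) \<Rightarrow> bool" where
  "laplacian_integral E \<longleftrightarrow> (\<forall>c. is_eigenvalue (laplacian E) c \<longrightarrow> c \<in> \<int>)"

definition coronal :: "complex^'n^'n \<Rightarrow> complex \<Rightarrow> complex" where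
  "coronal L x = (\<Sum>i\<in>UNIV. \<Sum>j\<in>UNIV. matrix_inv (mat x - L) $ i $ j)"

text \<open>Root of a rational function f (given by its values where defined):
  the rational function vanishes at x, i.e. its limit at x is 0 (this also
  accounts for removable singularities of the matrix-inverse formula).\<close>
definition rat_root :: "(complex \<Rightarrow> complex) \<Rightarrow> complex \<Rightarrow> bool" where
  "rat_root f x \<longleftrightarrow> (f \<longlongrightarrow> 0) (at x)"

text \<open>The product G1 (*) G2: vertices a_ik = Inl (i,k), b_ik = Inr (i,k).\<close>
fun prod_graph :: "('a \<Rightarrow> 'a \<Rightarrow> bool) \<Rightarrow> ('b \<Rightarrow> 'b \<Rightarrow> bool)
    \<Rightarrow> ('a \<times> 'b) + ('a \<times> 'b) \<Rightarrow> ('a \<times> 'b) + ('a \<times> 'b) \<Rightarrow> bool" where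
  "prod_graph E1 E2 (Inl (i, k)) (Inl (j, l)) = E1 i j"
| "prod_graph E1 E2 (Inr (r, i)) (Inr (s, j)) = (r = s \<and> E2 i j)"
| "prod_graph E1 E2 (Inl (i, p)) (Inr (j, q)) = (i = j)"
| "prod_graph E1 E2 (Inr (j, q)) (Inl (i, p)) = (i = j)"

end

theory Submission
  imports Defs "HOL-Computational_Algebra.Polynomial"
begin

(* Let n be the number of vertices of G2 and write an eigenvector of the product's Laplacian,
   for an eigenvalue c, as x_ik on a_ik and y_ik on b_ik. Either c = n, or one of three things
   happens. If some block x_i. is nonconstant, comparing two of its rows forces
   c = (deg u_i + 1) n. If all x_i. are constant but some y_i. is not, y_i. shifted by a constant
   is an eigenvector of L(G2) for c - n. If x and y are constant on all blocks, they satisfy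
   n (y - x) = c y and n L(G1) x + n (x - y) = c x, so x is an eigenvector of L(G1) for some mu
   with (c - n - n mu) (c - n) = n^2. Conversely, every nonzero eigenvalue nu of L(G2) yields the
   eigenvalue nu + n, and every real root of such a quadratic is an eigenvalue.
   Since L 1 = 0, the coronal of a graph on n vertices is n/x away from finitely many points, so
   the roots of the rational function in the statement are those of the quadratic, and these
   are real. *)

lemma laplacian_mult_vec_nth:
  "(laplacian E *v v) $ u = (\<Sum>w\<in>UNIV. if E u w then v$u - v$w else 0)"
proof -
  have "(laplacian E *v v) $ u =
      (\<Sum>w\<in>UNIV. (if u = w then real (degree E u) * v$w else 0) - (if E u w then v$w else 0))"
    unfolding laplacian_def matrix_vector_mult_def by (auto intro!: sum.cong simp: algebra_simps)
  also have "\<dots> = (\<Sum>w\<in>UNIV. if E u w then v$u - v$w else 0)"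
    by (simp add: sum_subtractf degree_def sum.If_cases)
  finally show ?thesis .
qed

lemma claplacian_mult_vec_nth:
  "(claplacian E *v v) $ u = (\<Sum>w\<in>UNIV. if E u w then v$u - v$w else 0)"
proof -
  have "(claplacian E *v v) $ u =
      (\<Sum>w\<in>UNIV. (if u = w then of_nat (degree E u) * v$w else 0) - (if E u w then v$w else 0))"
    unfolding claplacian_def laplacian_def matrix_vector_mult_def
    by (auto intro!: sum.cong simp: algebra_simps)
  also have "\<dots> = (\<Sum>w\<in>UNIV. if E u w then v$u - v$w else 0)"
    by (simp add: sum_subtractf degree_def sum.If_cases)
  finally show ?thesis .
qed

lemma sum_laplacian_mult_vec:
  assumes "simple_graph E"
  shows "(\<Sum>u\<in>UNIV. (laplacian E *v v) $ u) = 0"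
proof -
  have sym: "E u w = E w u" for u w
    using assms unfolding simple_graph_def by blast
  have if_diff: "(if P then a - b else 0) = (if P then a else 0) - (if P then b else (0::real))"
    for P a b by simp
  have "(\<Sum>u\<in>UNIV. \<Sum>w\<in>UNIV. if E u w then v$w else 0) =
        (\<Sum>w\<in>UNIV. \<Sum>u\<in>UNIV. if E u w then v$w else 0)"
    by (rule sum.swap)
  also have "\<dots> = (\<Sum>u\<in>UNIV. \<Sum>w\<in>UNIV. if E u w then v$u else 0)"
    using sym by simp
  finally show ?thesis
    by (simp add: laplacian_mult_vec_nth if_diff sum_subtractf)
qed

lemma matrix_vector_mult_mat: "mat c *v x = c *s (x::'a::semiring_1^'n)"
proof -
  have "(\<Sum>j\<in>UNIV. (if i = j then c else 0) * x$j) = (\<Sum>j\<in>UNIV. if i = j then c * x$j else 0)" for i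
    by (rule sum.cong) auto
  then show ?thesis by (simp add: vec_eq_iff matrix_vector_mult_def mat_def)
qed

lemma claplacian_eigenvalue_Re_nonneg:
  assumes eig: "claplacian E *v v = c *s v" and "v \<noteq> 0"
  shows "Re c \<ge> 0"
proof (rule ccontr)
  assume "\<not> Re c \<ge> 0"
  have "Max (range (\<lambda>w. norm (v$w))) \<in> range (\<lambda>w. norm (v$w))"
    by (rule Max_in) auto
  then obtain u where u: "Max (range (\<lambda>w. norm (v$w))) = norm (v$u)"
    by blast
  have max: "norm (v$w) \<le> norm (v$u)" for w
    unfolding u[symmetric] by (rule Max_ge) auto
  define d where "d = degree E u"
  have "(of_nat d - c) * v$u = (\<Sum>w\<in>UNIV. if E u w then v$w else 0)"
    using claplacian_mult_vec_nth[of E v u] eig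
    by (simp add: if_distrib[of "\<lambda>t. t - _"] sum_subtractf sum.If_cases d_def degree_def
        algebra_simps)
  then have "norm (of_nat d - c) * norm (v$u) \<le> (\<Sum>w\<in>UNIV. norm (if E u w then v$w else 0))"
    by (metis norm_mult norm_sum)
  also have "\<dots> \<le> (\<Sum>w\<in>UNIV. if E u w then norm (v$u) else 0)"
    by (rule sum_mono) (simp add: max)
  also have "\<dots> = real d * norm (v$u)"
    by (simp add: sum.If_cases d_def degree_def)
  finally have "norm (of_nat d - c) * norm (v$u) \<le> real d * norm (v$u)" .
  moreover have "real d < norm (of_nat d - c)"
    using complex_Re_le_cmod[of "of_nat d - c"] \<open>\<not> Re c \<ge> 0\<close> by simp
  ultimately have "norm (v$u) = 0"
    using mult_strict_right_mono[of "real d" "norm (of_nat d - c)" "norm (v$u)"]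
    by (smt (verit) norm_ge_zero)
  then have "v = 0"
    using max by (metis norm_le_zero_iff vec_eq_iff zero_index)
  with \<open>v \<noteq> 0\<close> show False ..
qed

lemma det_mat_minus_poly:
  fixes C :: "'a::comm_ring_1^'n^'n"
  obtains P where "\<And>w. det (mat w - C) = poly P w"
proof
  fix w
  show "det (mat w - C) = poly (\<Sum>p\<in>{p. p permutes (UNIV::'n set)}. [:of_int (sign p):] *
      (\<Prod>i\<in>UNIV. [: - C$i$(p i), if i = p i then 1 else 0 :])) w"
    unfolding det_def poly_sum poly_prod
    by (auto simp: mat_def poly_prod intro!: sum.cong arg_cong[where f="(*) _"] prod.cong)
qed

lemma finite_claplacian_eigenvalues:
  "finite {w. det (mat w - claplacian E) = 0}"
proof -
  obtain P where P: "\<And>w. det (mat w - claplacian E) = poly P w"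
    using det_mat_minus_poly[of "claplacian E"] by blast
  have "det (mat (-1) - claplacian E) \<noteq> 0"
  proof -
    have "v = 0" if "(mat (-1) - claplacian E) *v v = 0" for v
    proof (rule ccontr)
      assume "v \<noteq> 0"
      moreover from that have "claplacian E *v v = (-1) *s v"
        by (simp add: matrix_vector_mult_diff_rdistrib matrix_vector_mult_mat)
      ultimately have "Re (-1) \<ge> 0"
        by (rule claplacian_eigenvalue_Re_nonneg[rotated])
      then show False by simp
    qed
    then show ?thesis
      by (simp add: invertible_det_nz[symmetric] invertible_left_inverse matrix_left_invertible_ker)
  qed
  then have "P \<noteq> 0"
    using P[of "-1"] by auto
  then show ?thesis
    unfolding P by (rule poly_roots_finite)
qed

lemma matrix_inv_left:
  assumes "invertible A"
  shows "matrix_inv A ** A = mat 1"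
  using assms unfolding matrix_inv_def invertible_def by (metis (mono_tags, lifting) someI_ex)

lemma coronal_claplacian:
  fixes E :: "'v::finite \<Rightarrow> 'v \<Rightarrow> bool"
  assumes "w \<noteq> 0" and "det (mat w - claplacian E) \<noteq> 0"
  shows "coronal (claplacian E) w = of_nat CARD('v) / w"
proof -
  let ?one = "(\<chi> i. 1) :: complex^'v"
  define B where "B = matrix_inv (mat w - claplacian E)"
  have inverse: "B ** (mat w - claplacian E) = mat 1"
    using assms(2) unfolding B_def invertible_det_nz[symmetric] by (rule matrix_inv_left)
  have "claplacian E *v ?one = 0"
    unfolding vec_eq_iff claplacian_mult_vec_nth by (simp only: vec_lambda_beta diff_self) simp
  then have "(mat w - claplacian E) *v ?one = w *s ?one"
    by (simp add: matrix_vector_mult_diff_rdistrib matrix_vector_mult_mat)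
  then have "w *s (B *v ?one) = ?one"
    using inverse by (metis matrix_vector_mul_assoc matrix_vector_mul_lid vector_scalar_commute)
  then have "(B *v ?one) $ i = 1 / w" for i
    using assms(1) by (auto simp: vec_eq_iff field_simps)
  then show ?thesis
    by (simp add: coronal_def B_def[symmetric] matrix_vector_mult_def)
qed

lemma finite_coronal_claplacian_exceptions:
  fixes E :: "'v::finite \<Rightarrow> 'v \<Rightarrow> bool"
  shows "finite {w. coronal (claplacian E) w \<noteq> of_nat CARD('v) / w}"
  by (rule finite_subset[OF _ finite_insert[THEN iffD2, OF finite_claplacian_eigenvalues]])
    (use coronal_claplacian in blast)

lemma tendsto_at_cong_finite:
  fixes x :: "'a::t1_space"
  assumes "finite {z. f z \<noteq> g z}"
  shows "(f \<longlongrightarrow> l) (at x) \<longleftrightarrow> (g \<longlongrightarrow> l) (at x)"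
proof (rule tendsto_cong)
  have "eventually (\<lambda>z. z \<notin> {z. f z \<noteq> g z}) (at x)"
    using islimpt_finite[OF assms] islimpt_iff_eventually by blast
  then show "eventually (\<lambda>z. f z = g z) (at x)"
    by (rule eventually_mono) simp
qed

lemma tendsto_0_diff_simple_pole_iff:
  fixes p :: "'a::real_normed_field \<Rightarrow> 'a"
  assumes p: "isCont p x" and "c \<noteq> 0"
  shows "((\<lambda>z. p z - c / (z - a)) \<longlongrightarrow> 0) (at x) \<longleftrightarrow> p x * (x - a) = c"
proof (cases "x = a")
  case True
  have "\<not> ((\<lambda>z. p z - c / (z - a)) \<longlongrightarrow> 0) (at x)"
  proof
    assume "((\<lambda>z. p z - c / (z - a)) \<longlongrightarrow> 0) (at x)"
    then have "((\<lambda>z. (p z - c / (z - a)) * (z - a)) \<longlongrightarrow> 0 * (x - a)) (at x)"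
      by (intro tendsto_intros)
    moreover have "eventually (\<lambda>z. (p z - c / (z - a)) * (z - a) = p z * (z - a) - c) (at x)"
      using eventually_neq_at_within[of x x UNIV]
      by (rule eventually_mono) (simp add: True left_diff_distrib)
    ultimately have "((\<lambda>z. p z * (z - a) - c) \<longlongrightarrow> 0) (at x)"
      by (simp add: tendsto_cong)
    moreover have "((\<lambda>z. p z * (z - a) - c) \<longlongrightarrow> p x * (x - a) - c) (at x)"
      using p by (intro tendsto_intros) (simp add: isCont_def)
    ultimately have "p x * (x - a) - c = 0"
      using tendsto_unique[OF trivial_limit_at] by blast
    with True \<open>c \<noteq> 0\<close> show False by simp
  qed
  with True \<open>c \<noteq> 0\<close> show ?thesis by simp
next
  case False
  have lim: "((\<lambda>z. p z - c / (z - a)) \<longlongrightarrow> p x - c / (x - a)) (at x)"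
    using p False by (intro tendsto_intros) (simp_all add: isCont_def)
  have "((\<lambda>z. p z - c / (z - a)) \<longlongrightarrow> 0) (at x) \<longleftrightarrow> p x - c / (x - a) = 0"
    using tendsto_unique[OF trivial_limit_at lim] lim by (metis (no_types))
  also have "\<dots> \<longleftrightarrow> p x * (x - a) = c"
    using False by (simp add: eq_divide_eq)
  finally show ?thesis .
qed

lemma rat_root_coronal_claplacian_iff:
  fixes E :: "'v::finite \<Rightarrow> 'v \<Rightarrow> bool"
  shows "rat_root (\<lambda>x. x - of_nat CARD('v) - of_nat CARD('v) * m
            - of_nat CARD('v) * coronal (claplacian E) (x - of_nat CARD('v))) x
    \<longleftrightarrow> (x - of_nat CARD('v) - of_nat CARD('v) * m) * (x - of_nat CARD('v))
        = of_nat CARD('v) * of_nat CARD('v)"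
proof -
  let ?n = "of_nat CARD('v) :: complex"
  let ?f = "\<lambda>x. x - ?n - ?n * m - ?n * coronal (claplacian E) (x - ?n)"
  have "{z. ?f z \<noteq> z - ?n - ?n * m - ?n * ?n / (z - ?n)}
      \<subseteq> (\<lambda>w. w + ?n) ` {w. coronal (claplacian E) w \<noteq> ?n / w}"
    by (auto intro!: image_eqI[where x="_ - ?n"])
  then have "finite {z. ?f z \<noteq> z - ?n - ?n * m - ?n * ?n / (z - ?n)}"
    using finite_coronal_claplacian_exceptions[of E] finite_subset by blast
  then have "rat_root ?f x \<longleftrightarrow> ((\<lambda>z. z - ?n - ?n * m - ?n * ?n / (z - ?n)) \<longlongrightarrow> 0) (at x)"
    unfolding rat_root_def by (rule tendsto_at_cong_finite)
  also have "\<dots> \<longleftrightarrow> (x - ?n - ?n * m) * (x - ?n) = ?n * ?n"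
    by (rule tendsto_0_diff_simple_pole_iff) (auto intro!: continuous_intros)
  finally show ?thesis .
qed

lemma Im_eq_0_if_mult_eq_nonneg:
  fixes x :: complex and p q c :: real
  assumes eq: "(x - of_real p) * (x - of_real q) = of_real c" and "c \<ge> 0"
  shows "Im x = 0"
proof (rule ccontr)
  assume "Im x \<noteq> 0"
  have "Im x * ((Re x - p) + (Re x - q)) = 0"
    using arg_cong[OF eq, of Im] by (simp add: algebra_simps)
  with \<open>Im x \<noteq> 0\<close> have q: "Re x - q = - (Re x - p)"
    by simp
  have "(Re x - p) * (Re x - q) - Im x * Im x = c"
    using arg_cong[OF eq, of Re] by simp
  then have "- ((Re x - p) * (Re x - p)) - Im x * Im x = c"
    unfolding q by (simp add: algebra_simps)
  moreover have "Im x * Im x > 0"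
    using \<open>Im x \<noteq> 0\<close> by (auto simp: zero_less_mult_iff linorder_neq_iff)
  ultimately show False
    using \<open>c \<ge> 0\<close> by (smt (verit) zero_le_square)
qed

lemma rat_root_coronal_claplacian_iff_real:
  fixes E :: "'v::finite \<Rightarrow> 'v \<Rightarrow> bool" and \<mu> :: real
  shows "rat_root (\<lambda>x. x - of_nat CARD('v) - of_nat CARD('v) * complex_of_real \<mu>
            - of_nat CARD('v) * coronal (claplacian E) (x - of_nat CARD('v))) x
    \<longleftrightarrow> (\<exists>a. x = complex_of_real a \<and>
        (a - real CARD('v) - real CARD('v) * \<mu>) * (a - real CARD('v))
          = real CARD('v) * real CARD('v))"
    (is "_ \<longleftrightarrow> (\<exists>a. x = _ \<and> ?quadratic a)")
proof -
  let ?n = "real CARD('v)"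
  have "rat_root (\<lambda>x. x - of_nat CARD('v) - of_nat CARD('v) * complex_of_real \<mu>
            - of_nat CARD('v) * coronal (claplacian E) (x - of_nat CARD('v))) x
      \<longleftrightarrow> (x - of_real (?n + ?n * \<mu>)) * (x - of_real ?n) = of_real (?n * ?n)"
    unfolding rat_root_coronal_claplacian_iff by (simp add: algebra_simps)
  also have "\<dots> \<longleftrightarrow> (\<exists>a. x = complex_of_real a \<and> ?quadratic a)"
  proof
    assume eq: "(x - of_real (?n + ?n * \<mu>)) * (x - of_real ?n) = of_real (?n * ?n)"
    then have "Im x = 0"
      by (rule Im_eq_0_if_mult_eq_nonneg) simp
    then have x: "x = complex_of_real (Re x)"
      by (simp add: complex_eq_iff)
    then have "?quadratic (Re x)"
      using eq by (metis diff_diff_eq of_real_diff of_real_eq_iff of_real_mult)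
    with x show "\<exists>a. x = complex_of_real a \<and> ?quadratic a"
      by blast
  next
    assume "\<exists>a. x = complex_of_real a \<and> ?quadratic a"
    then show "(x - of_real (?n + ?n * \<mu>)) * (x - of_real ?n) = of_real (?n * ?n)"
      by (metis diff_diff_eq of_real_diff of_real_mult)
  qed
  finally show ?thesis .
qed

lemma is_eigenvalue_iff_nth:
  "is_eigenvalue A c \<longleftrightarrow> (\<exists>v. v \<noteq> 0 \<and> (\<forall>u. (A *v v) $ u = c * v $ u))"
  by (simp add: is_eigenvalue_def vec_eq_iff)

lemma sum_UNIV_Plus:
  fixes g :: "'a::finite + 'b::finite \<Rightarrow> 'c::comm_monoid_add"
  shows "(\<Sum>w\<in>UNIV. g w) = (\<Sum>a\<in>UNIV. g (Inl a)) + (\<Sum>b\<in>UNIV. g (Inr b))"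
proof -
  have "(\<Sum>w\<in>UNIV <+> UNIV. g w) = (\<Sum>a\<in>UNIV. g (Inl a)) + (\<Sum>b\<in>UNIV. g (Inr b))"
    by (subst sum.Plus) (auto simp: comp_def)
  then show ?thesis by simp
qed

lemma sum_UNIV_prod:
  fixes g :: "'a::finite \<times> 'b::finite \<Rightarrow> 'c::comm_monoid_add"
  shows "(\<Sum>w\<in>UNIV. g w) = (\<Sum>a\<in>UNIV. \<Sum>b\<in>UNIV. g (a, b))"
  by (simp add: sum.cartesian_product)

lemma laplacian_prod_graph_Inl:
  fixes E1 :: "'a::finite \<Rightarrow> 'a \<Rightarrow> bool" and E2 :: "'b::finite \<Rightarrow> 'b \<Rightarrow> bool"
  shows "(laplacian (prod_graph E1 E2) *v V) $ Inl (i, k) =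
    (\<Sum>j\<in>UNIV. if E1 i j then \<Sum>l\<in>UNIV. V $ Inl (i, k) - V $ Inl (j, l) else 0)
    + (\<Sum>q\<in>UNIV. V $ Inl (i, k) - V $ Inr (i, q))"
  unfolding laplacian_mult_vec_nth sum_UNIV_Plus sum_UNIV_prod
  by (simp add: if_distrib sum.If_cases)

lemma laplacian_prod_graph_Inr:
  fixes E1 :: "'a::finite \<Rightarrow> 'a \<Rightarrow> bool" and E2 :: "'b::finite \<Rightarrow> 'b \<Rightarrow> bool"
  shows "(laplacian (prod_graph E1 E2) *v V) $ Inr (i, k) =
    (\<Sum>p\<in>UNIV. V $ Inr (i, k) - V $ Inl (i, p))
    + (\<Sum>j\<in>UNIV. if E2 k j then V $ Inr (i, k) - V $ Inr (i, j) else 0)"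
proof -
  have "(\<Sum>b\<in>UNIV. if P then f b else 0) = (if P then sum f UNIV else 0)"
    for P and f :: "'b \<Rightarrow> real"
    by simp
  then show ?thesis
    unfolding laplacian_mult_vec_nth sum_UNIV_Plus sum_UNIV_prod
    by (simp add: if_if_eq_conj[symmetric])
qed

lemma is_eigenvalue_prod_graph_shift:
  fixes E1 :: "'a::finite \<Rightarrow> 'a \<Rightarrow> bool" and E2 :: "'b::finite \<Rightarrow> 'b \<Rightarrow> bool"
  assumes "simple_graph E2" and "is_eigenvalue (laplacian E2) \<nu>" and "\<nu> \<noteq> 0"
  shows "is_eigenvalue (laplacian (prod_graph E1 E2)) (\<nu> + real CARD('b))"
proof -
  obtain h where "h \<noteq> 0" and h: "\<And>k. (laplacian E2 *v h) $ k = \<nu> * h $ k"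
    using assms(2) unfolding is_eigenvalue_iff_nth by blast
  have "\<nu> * (\<Sum>k\<in>UNIV. h $ k) = 0"
    using sum_laplacian_mult_vec[OF assms(1), of h] by (simp add: h sum_distrib_left)
  then have sum_h: "(\<Sum>k\<in>UNIV. h $ k) = 0"
    using assms(3) by simp
  define V :: "real^('a \<times> 'b + 'a \<times> 'b)" where
    "V = (\<chi> u. case u of Inl _ \<Rightarrow> 0 | Inr (_, k) \<Rightarrow> h $ k)"
  obtain k where "h $ k \<noteq> 0"
    using \<open>h \<noteq> 0\<close> by (auto simp: vec_eq_iff)
  then have "V $ Inr (undefined, k) \<noteq> 0"
    by (simp add: V_def)
  then have "V \<noteq> 0"
    by auto
  moreover have "(laplacian (prod_graph E1 E2) *v V) $ u = (\<nu> + real CARD('b)) * V $ u" for u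
  proof (cases u)
    case (Inl p)
    then show ?thesis
      by (cases p) (simp add: laplacian_prod_graph_Inl V_def sum_negf sum_h cong: if_cong)
  next
    case (Inr p)
    then show ?thesis
      using h[unfolded laplacian_mult_vec_nth]
      by (cases p) (simp add: laplacian_prod_graph_Inr V_def algebra_simps cong: if_cong)
  qed
  ultimately show ?thesis
    unfolding is_eigenvalue_iff_nth by blast
qed

lemma is_eigenvalue_prod_graph_quadratic:
  fixes E1 :: "'a::finite \<Rightarrow> 'a \<Rightarrow> bool" and E2 :: "'b::finite \<Rightarrow> 'b \<Rightarrow> bool"
  defines "n \<equiv> real CARD('b)"
  assumes "is_eigenvalue (laplacian E1) \<mu>" and quadratic: "(a - n - n * \<mu>) * (a - n) = n * n"
  shows "is_eigenvalue (laplacian (prod_graph E1 E2)) a"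
proof -
  obtain f where "f \<noteq> 0" and f: "\<And>i. (laplacian E1 *v f) $ i = \<mu> * f $ i"
    using assms(2) unfolding is_eigenvalue_iff_nth by blast
  \<comment> \<open>x = (n - a) f on the a-vertices and y = n f on the b-vertices solve the block equations
      n (y - x) = a y and n L(G1) x + n (x - y) = a x.\<close>
  define V :: "real^('a \<times> 'b + 'a \<times> 'b)" where
    "V = (\<chi> u. case u of Inl (i, _) \<Rightarrow> (n - a) * f $ i | Inr (i, _) \<Rightarrow> n * f $ i)"
  obtain i where "f $ i \<noteq> 0"
    using \<open>f \<noteq> 0\<close> by (auto simp: vec_eq_iff)
  then have "V $ Inr (i, undefined) \<noteq> 0"
    by (simp add: V_def n_def)
  then have "V \<noteq> 0"
    by auto
  moreover have "(laplacian (prod_graph E1 E2) *v V) $ u = a * V $ u" for u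
  proof (cases u)
    case (Inl p)
    obtain i k where p: "p = (i, k)"
      by (cases p)
    have "(laplacian (prod_graph E1 E2) *v V) $ u
        = n * (n - a) * (\<Sum>j\<in>UNIV. if E1 i j then f $ i - f $ j else 0) - n * a * f $ i"
      unfolding Inl p laplacian_prod_graph_Inl
      by (simp add: V_def n_def sum_distrib_left algebra_simps if_distrib cong: if_cong)
    also have "\<dots> = (n * (n - a) * \<mu> - n * a) * f $ i"
      using f[of i] by (simp add: laplacian_mult_vec_nth algebra_simps)
    also have "n * (n - a) * \<mu> - n * a = a * (n - a)"
      using quadratic by (simp add: algebra_simps)
    finally show ?thesis
      by (simp add: Inl p V_def)
  next
    case (Inr p)
    then show ?thesis
      by (cases p) (simp add: laplacian_prod_graph_Inr V_def n_def algebra_simps cong: if_cong)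
  qed
  ultimately show ?thesis
    unfolding is_eigenvalue_iff_nth by blast
qed

lemma prod_graph_eigenvalue_degree_if_Inl_nonconstant:
  fixes E1 :: "'a::finite \<Rightarrow> 'a \<Rightarrow> bool" and E2 :: "'b::finite \<Rightarrow> 'b \<Rightarrow> bool"
  assumes eig: "\<And>u. (laplacian (prod_graph E1 E2) *v V) $ u = c * V $ u"
    and "V $ Inl (i, k) \<noteq> V $ Inl (i, k')"
  shows "c = real ((degree E1 i + 1) * CARD('b))"
proof -
  define R where "R = (\<Sum>j\<in>UNIV. if E1 i j then \<Sum>l\<in>UNIV. V $ Inl (j, l) else 0)
    + (\<Sum>q\<in>UNIV. V $ Inr (i, q))"
  have row: "c * V $ Inl (i, t) = real ((degree E1 i + 1) * CARD('b)) * V $ Inl (i, t) - R" for t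
    using eig[of "Inl (i, t)"]
    by (simp add: laplacian_prod_graph_Inl R_def sum.If_cases sum_subtractf degree_def
        algebra_simps)
  have "(real ((degree E1 i + 1) * CARD('b)) - c) * (V $ Inl (i, k) - V $ Inl (i, k')) = 0"
    using row[of k] row[of k'] by (simp add: algebra_simps)
  with assms(2) show ?thesis
    by simp
qed

lemma prod_graph_eigenvalue_shift_if_Inr_nonconstant:
  fixes E1 :: "'a::finite \<Rightarrow> 'a \<Rightarrow> bool" and E2 :: "'b::finite \<Rightarrow> 'b \<Rightarrow> bool"
  defines "n \<equiv> real CARD('b)"
  assumes eig: "\<And>u. (laplacian (prod_graph E1 E2) *v V) $ u = c * V $ u"
    and Inl: "\<And>k. V $ Inl (i, k) = x" and "V $ Inr (i, k) \<noteq> V $ Inr (i, k')" and "c \<noteq> n"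
  shows "is_eigenvalue (laplacian E2) (c - n)"
proof -
  define w :: "real^'b" where "w = (\<chi> t. V $ Inr (i, t) + n * x / (c - n))"
  have "w $ k \<noteq> w $ k'"
    using assms(4) by (simp add: w_def)
  then have "w \<noteq> 0"
    by auto
  moreover have "(laplacian E2 *v w) $ t = (c - n) * w $ t" for t
  proof -
    have "(laplacian E2 *v w) $ t = (\<Sum>j\<in>UNIV. if E2 t j then V $ Inr (i, t) - V $ Inr (i, j) else 0)"
      by (simp add: laplacian_mult_vec_nth w_def cong: if_cong)
    also have "\<dots> = c * V $ Inr (i, t) - n * (V $ Inr (i, t) - x)"
      using eig[of "Inr (i, t)"] by (simp add: laplacian_prod_graph_Inr Inl n_def algebra_simps)
    also have "\<dots> = (c - n) * w $ t"
      using \<open>c \<noteq> n\<close> by (simp add: w_def field_simps)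
    finally show ?thesis .
  qed
  ultimately show ?thesis
    unfolding is_eigenvalue_iff_nth by blast
qed

lemma prod_graph_eigenvalue_quadratic_if_blockwise_constant:
  fixes E1 :: "'a::finite \<Rightarrow> 'a \<Rightarrow> bool" and E2 :: "'b::finite \<Rightarrow> 'b \<Rightarrow> bool"
  defines "n \<equiv> real CARD('b)"
  assumes eig: "\<And>u. (laplacian (prod_graph E1 E2) *v V) $ u = c * V $ u" and "V \<noteq> 0"
    and Inl: "\<And>i k. V $ Inl (i, k) = x i" and Inr: "\<And>i k. V $ Inr (i, k) = y i"
    and "c \<noteq> n"
  shows "\<exists>\<mu>. is_eigenvalue (laplacian E1) \<mu> \<and> (c - n - n * \<mu>) * (c - n) = n * n"
proof -
  have "n > 0"
    by (simp add: n_def)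
  have y: "y i = n * x i / (n - c)" for i
  proof -
    have "n * (y i - x i) = c * y i"
      using eig[of "Inr (i, undefined)"]
      by (simp add: laplacian_prod_graph_Inr Inl Inr n_def cong: if_cong)
    then show ?thesis
      using \<open>c \<noteq> n\<close> by (simp add: field_simps)
  qed
  define \<mu> where "\<mu> = (c - n + n * n / (n - c)) / n"
  define xv :: "real^'a" where "xv = (\<chi> i. x i)"
  have "xv \<noteq> 0"
  proof
    assume "xv = 0"
    then have "x i = 0" for i
      by (simp add: xv_def vec_eq_iff)
    then have "V $ u = 0" for u
      using y by (cases u) (auto simp: Inl Inr)
    with \<open>V \<noteq> 0\<close> show False
      by (simp add: vec_eq_iff)
  qed
  moreover have "(laplacian E1 *v xv) $ i = \<mu> * xv $ i" for i
  proof -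
    have "n * (laplacian E1 *v xv) $ i + n * (x i - y i) = c * x i"
      using eig[of "Inl (i, undefined)", unfolded laplacian_prod_graph_Inl]
      by (simp add: laplacian_mult_vec_nth Inl Inr xv_def n_def
          sum_distrib_left if_distrib cong: if_cong)
    then show ?thesis
      using \<open>n > 0\<close> \<open>c \<noteq> n\<close> unfolding \<mu>_def y by (simp add: xv_def field_simps)
  qed
  ultimately have "is_eigenvalue (laplacian E1) \<mu>"
    unfolding is_eigenvalue_iff_nth by blast
  moreover have "(c - n - n * \<mu>) * (c - n) = n * n"
    using \<open>n > 0\<close> \<open>c \<noteq> n\<close> by (simp add: \<mu>_def field_simps)
  ultimately show ?thesis
    by blast
qed

lemma prod_graph_eigenvalue_cases:
  fixes E1 :: "'a::finite \<Rightarrow> 'a \<Rightarrow> bool" and E2 :: "'b::finite \<Rightarrow> 'b \<Rightarrow> bool"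
  defines "n \<equiv> real CARD('b)"
  assumes "is_eigenvalue (laplacian (prod_graph E1 E2)) c"
  obtains "c = n"
    | i where "c = real ((degree E1 i + 1) * CARD('b))"
    | "is_eigenvalue (laplacian E2) (c - n)"
    | \<mu> where "is_eigenvalue (laplacian E1) \<mu>" and "(c - n - n * \<mu>) * (c - n) = n * n"
proof -
  obtain V where "V \<noteq> 0" and eig: "\<And>u. (laplacian (prod_graph E1 E2) *v V) $ u = c * V $ u"
    using assms(2) unfolding is_eigenvalue_iff_nth by blast
  consider "c = n"
    | i k k' where "V $ Inl (i, k) \<noteq> V $ Inl (i, k')"
    | i k k' where "\<And>k. V $ Inl (i, k) = V $ Inl (i, undefined)"
        and "V $ Inr (i, k) \<noteq> V $ Inr (i, k')" and "c \<noteq> n"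
    | "\<And>i k. V $ Inl (i, k) = V $ Inl (i, undefined)"
        and "\<And>i k. V $ Inr (i, k) = V $ Inr (i, undefined)" and "c \<noteq> n"
    by metis
  then show thesis
  proof cases
    case 1
    then show thesis by (rule that(1))
  next
    case 2
    then show thesis
      using prod_graph_eigenvalue_degree_if_Inl_nonconstant[OF eig] that(2) by blast
  next
    case 3
    then show thesis
      using prod_graph_eigenvalue_shift_if_Inr_nonconstant[OF eig] that(3) unfolding n_def by blast
  next
    case 4
    then show thesis
      using prod_graph_eigenvalue_quadratic_if_blockwise_constant[OF eig \<open>V \<noteq> 0\<close> 4[unfolded n_def]] that(4)
      unfolding n_def by blast
  qed
qed

lemma laplacian_integral_prod_graph_iff:
  fixes E1 :: "'a::finite \<Rightarrow> 'a \<Rightarrow> bool" and E2 :: "'b::finite \<Rightarrow> 'b \<Rightarrow> bool"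
  defines "n \<equiv> real CARD('b)"
  assumes "simple_graph E2"
  shows "laplacian_integral (prod_graph E1 E2) \<longleftrightarrow>
    laplacian_integral E2 \<and>
    (\<forall>\<mu> a. is_eigenvalue (laplacian E1) \<mu> \<longrightarrow> (a - n - n * \<mu>) * (a - n) = n * n \<longrightarrow> a \<in> \<int>)"
    (is "_ \<longleftrightarrow> ?rhs")
proof
  assume int: "laplacian_integral (prod_graph E1 E2)"
  have "\<nu> \<in> \<int>" if "is_eigenvalue (laplacian E2) \<nu>" for \<nu>
  proof (cases "\<nu> = 0")
    case False
    then have "\<nu> + n \<in> \<int>"
      using int is_eigenvalue_prod_graph_shift[OF assms(2) that]
      unfolding laplacian_integral_def n_def by blast
    then have "\<nu> + n - n \<in> \<int>"
      unfolding n_def by (intro Ints_diff Ints_of_nat)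
    then show ?thesis
      by simp
  qed simp
  moreover have "a \<in> \<int>"
    if "is_eigenvalue (laplacian E1) \<mu>" and "(a - n - n * \<mu>) * (a - n) = n * n" for \<mu> a
    using int is_eigenvalue_prod_graph_quadratic[OF that[unfolded n_def]]
    unfolding laplacian_integral_def by blast
  ultimately show ?rhs
    unfolding laplacian_integral_def by blast
next
  assume int: ?rhs
  have "c \<in> \<int>" if "is_eigenvalue (laplacian (prod_graph E1 E2)) c" for c
    using that
  proof (cases rule: prod_graph_eigenvalue_cases)
    case 3
    then have "c - n + n \<in> \<int>"
      using int unfolding laplacian_integral_def n_def by (intro Ints_add Ints_of_nat) blast
    then show ?thesis
      by simp
  qed (use int in \<open>auto simp: n_def\<close>)
  then show "laplacian_integral (prod_graph E1 E2)"
    unfolding laplacian_integral_def by blast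
qed

theorem theorem6:
  fixes E1 :: "'a::finite \<Rightarrow> 'a \<Rightarrow> bool" and E2 :: "'b::finite \<Rightarrow> 'b \<Rightarrow> bool"
    and r1 r2 :: nat
  assumes "simple_graph E1" and "simple_graph E2"
    and "regular E1 r1" and "regular E2 r2"
  shows "laplacian_integral (prod_graph E1 E2) \<longleftrightarrow>
    (laplacian_integral E2 \<and>
     (\<forall>\<mu>. is_eigenvalue (laplacian E1) \<mu> \<longrightarrow>
        (\<forall>x. rat_root (\<lambda>x. x - of_nat CARD('b) - of_nat CARD('b) * complex_of_real \<mu>
                 - of_nat CARD('b) * coronal (claplacian E2) (x - of_nat CARD('b))) x
             \<longrightarrow> x \<in> \<int>)))"
  unfolding laplacian_integral_prod_graph_iff[OF assms(2)] rat_root_coronal_claplacian_iff_real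
  by fastforce

end
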